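(* Let $G=(V,E)$ be a locally finite graph without isolated edge, and let $L=\{L_v:v\in V\}\cup\{L_e:e\in E\}$ be a set of lists of weights for $G$. For a subgraph $H$ of $G$, let $L_H$ denote the restriction of $L$ to $V(H)\cup E(H)$. If every finite induced subgraph $H$ of $G$ that is not isomorphic to $K_2$ has an $L_H$-weighting, then $G$ has an $L$-weighting.
   Context: Graphs are simple and may be infinite; locally finite means every vertex has finite degree; an isolated edge is a connected component isomorphic to $K_2$. Each list is a finite subset of $\{1,\dots,k\}$ for some natural number $k$. For a graph $F$ and a set of lists $M=\{M_v:v\in V(F)\}\cup\{M_e:e\in E(F)\}$, a weighting of $F$ from $M$ is a function $\omega\colon V(F)\cup E(F)\to\mathbb{Z}_{>0}$ with $\omega(v)\in M_v$ and $\omega(e)\in M_e$ for all vertices $v$ and edges $e$ of $F$. The weighted degree of a vertex $v$ in $F$ is $s_\omega(v)=\sum_{w\in N_F(v)}\omega(vw)+\omega(v)$. An $M$-weighting of $F$ is a weighting $\omega$ of $F$ from $M$ such that $s_\omega(u)\neq s_\omega(v)$ for every edge $uv$ of $F$. *)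

theory Defs
  imports Main
begin

definition simple_graph :: "'a set \<Rightarrow> 'a set set \<Rightarrow> bool" where
  "simple_graph V E \<longleftrightarrow> (\<forall>e\<in>E. \<exists>u v. u \<noteq> v \<and> u \<in> V \<and> v \<in> V \<and> e = {u, v})"

definition nbrs :: "'a set set \<Rightarrow> 'a \<Rightarrow> 'a set" where
  "nbrs E v = {u. {u, v} \<in> E}"

definition locally_finite :: "'a set \<Rightarrow> 'a set set \<Rightarrow> bool" where
  "locally_finite V E \<longleftrightarrow> (\<forall>v\<in>V. finite (nbrs E v))"

text \<open>An isolated edge: a connected component isomorphic to K2.\<close>
definition no_isolated_edge :: "'a set set \<Rightarrow> bool" where
  "no_isolated_edge E \<longleftrightarrow> \<not> (\<exists>u v. {u, v} \<in> E \<and> nbrs E u = {v} \<and> nbrs E v = {u})"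

definition induced_edges :: "'a set set \<Rightarrow> 'a set \<Rightarrow> 'a set set" where
  "induced_edges E S = {e \<in> E. e \<subseteq> S}"

definition is_K2 :: "'a set \<Rightarrow> 'a set set \<Rightarrow> bool" where
  "is_K2 V E \<longleftrightarrow> (\<exists>u v. u \<noteq> v \<and> V = {u, v} \<and> E = {{u, v}})"

definition wdeg :: "'a set set \<Rightarrow> ('a \<Rightarrow> nat) \<Rightarrow> ('a set \<Rightarrow> nat) \<Rightarrow> 'a \<Rightarrow> nat" where
  "wdeg E wv we v = (\<Sum>u\<in>nbrs E v. we {v, u}) + wv v"

definition is_L_weighting ::
  "'a set \<Rightarrow> 'a set set \<Rightarrow> ('a \<Rightarrow> nat set) \<Rightarrow> ('a set \<Rightarrow> nat set) \<Rightarrow> ('a \<Rightarrow> nat) \<Rightarrow> ('a set \<Rightarrow> nat) \<Rightarrow> bool" where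
  "is_L_weighting V E Lv Le wv we \<longleftrightarrow>
     (\<forall>v\<in>V. wv v \<in> Lv v) \<and> (\<forall>e\<in>E. we e \<in> Le e) \<and>
     (\<forall>u v. {u, v} \<in> E \<longrightarrow> wdeg E wv we u \<noteq> wdeg E wv we v)"

end

theory Submission
  imports Defs "HOL-Analysis.Function_Topology"
begin

text \<open>Weightings of G from L are the points of the product of the finite discrete spaces
  L_v and L_e, which is compact by Tychonoff's theorem. By local finiteness, whether the
  weighted degrees of the two ends of an edge differ depends on finitely many coordinates only,
  so each edge defines a closed set of weightings. Finitely many edges F are separated by an
  L_H-weighting of the subgraph H induced by the closed neighbourhood of the ends of F: H is
  not K2 because G has no isolated edge, and the ends of F have the same weighted degree in H
  as in G. Hence these closed sets have the finite intersection property.\<close>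

lemma PiE_finite_intersection_property:
  fixes P :: "'c \<Rightarrow> ('i \<Rightarrow> 'v) \<Rightarrow> bool"
  assumes fin_L: "\<And>i. i \<in> I \<Longrightarrow> finite (L i)"
    and fin_J: "\<And>c. c \<in> Cs \<Longrightarrow> finite (J c)"
    and locality: "\<And>c f g. c \<in> Cs \<Longrightarrow> f \<in> Pi\<^sub>E I L \<Longrightarrow> g \<in> Pi\<^sub>E I L \<Longrightarrow>
                  (\<And>i. i \<in> J c \<Longrightarrow> f i = g i) \<Longrightarrow> P c f \<Longrightarrow> P c g"
    and fin_sat: "\<And>F. finite F \<Longrightarrow> F \<subseteq> Cs \<Longrightarrow> \<exists>f\<in>Pi\<^sub>E I L. \<forall>c\<in>F. P c f"
  shows "\<exists>f\<in>Pi\<^sub>E I L. \<forall>c\<in>Cs. P c f"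
proof -
  define X where "X = product_topology (\<lambda>i. discrete_topology (L i)) I"
  define A where "A c = {f \<in> Pi\<^sub>E I L. P c f}" for c
  have top: "topspace X = Pi\<^sub>E I L"
    by (simp add: X_def)
  have "compact_space X"
    unfolding X_def compact_space_product_topology
    using fin_L by (simp add: compact_space_discrete_topology)
  moreover have "closedin X (A c)" if c: "c \<in> Cs" for c
  proof -
    have "openin X (Pi\<^sub>E I L - A c)"
    proof (rule openin_subopen[THEN iffD2], intro ballI)
      fix f assume f: "f \<in> Pi\<^sub>E I L - A c"
      define U where "U i = (if i \<in> J c then {f i} else L i)" for i
      have "{i \<in> I. U i \<noteq> L i} \<subseteq> J c"
        by (auto simp: U_def)
      then have "openin X (Pi\<^sub>E I U)"
        unfolding X_def openin_PiE_gen using fin_J[OF c] f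
        by (auto simp: U_def PiE_iff intro: finite_subset)
      moreover have "f \<in> Pi\<^sub>E I U"
        using f by (auto simp: U_def PiE_iff)
      moreover have "Pi\<^sub>E I U \<subseteq> Pi\<^sub>E I L - A c"
      proof
        fix g assume g: "g \<in> Pi\<^sub>E I U"
        then have gL: "g \<in> Pi\<^sub>E I L"
          using f by (auto simp: U_def PiE_iff split: if_splits)
        have "g i = f i" if "i \<in> J c" for i
          using g f that by (cases "i \<in> I") (auto simp: U_def PiE_iff extensional_def)
        then have "\<not> P c g"
          using locality[OF c gL] f by (auto simp: A_def)
        then show "g \<in> Pi\<^sub>E I L - A c"
          using gL by (simp add: A_def)
      qed
      ultimately show "\<exists>T. openin X T \<and> f \<in> T \<and> T \<subseteq> Pi\<^sub>E I L - A c"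
        by blast
    qed
    then show ?thesis
      unfolding closedin_def top by (auto simp: A_def)
  qed
  moreover have "\<Inter>\<F> \<noteq> {}" if "finite \<F>" "\<F> \<subseteq> insert (topspace X) (A ` Cs)" for \<F>
  proof -
    have "finite (\<F> - {topspace X})" "\<F> - {topspace X} \<subseteq> A ` Cs"
      using that by auto
    from finite_subset_image[OF this] obtain F
      where F: "F \<subseteq> Cs" "finite F" "\<F> - {topspace X} = A ` F"
      by blast
    obtain f where f: "f \<in> Pi\<^sub>E I L" "\<forall>c\<in>F. P c f"
      using fin_sat[OF F(2,1)] by blast
    have "f \<in> C" if "C \<in> \<F>" for C
    proof (cases "C = topspace X")
      case False
      then have "C \<in> A ` F"
        using that F(3) by blast
      then show ?thesis
        using f by (auto simp: A_def)
    qed (use f top in simp)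
    then show ?thesis
      by blast
  qed
  ultimately have "\<Inter>(insert (topspace X) (A ` Cs)) \<noteq> {}"
    unfolding compact_space_fip
    by (elim allE[of _ "insert (topspace X) (A ` Cs)"]) auto
  then show ?thesis
    by (auto simp: A_def top)
qed

lemma mem_nbrs_iff: "v \<in> nbrs E u \<longleftrightarrow> {u, v} \<in> E"
  by (simp add: nbrs_def insert_commute)

lemma simple_graph_edgeE:
  assumes "simple_graph V E" "e \<in> E"
  obtains u v where "e = {u, v}" "u \<in> V" "v \<in> V" "u \<noteq> v"
  using assms unfolding simple_graph_def by blast

lemma simple_graph_edgeD:
  assumes "simple_graph V E" "{u, v} \<in> E"
  shows "u \<in> V" "v \<in> V" "u \<noteq> v"
  using assms unfolding simple_graph_def by (metis doubleton_eq_iff)+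

lemma simple_graph_edge_subset:
  assumes "simple_graph V E" "e \<in> E"
  shows "finite e" "e \<subseteq> V"
  using simple_graph_edgeE[OF assms] by (metis finite.emptyI finite.insertI empty_subsetI insert_subset)+

lemma simple_graph_edge_other_end:
  assumes "simple_graph V E" "e \<in> E" "w \<in> e"
  shows "\<exists>x\<in>e. {w, x} \<in> E"
  using simple_graph_edgeE[OF assms(1,2)] assms(2,3) by (metis insert_commute insertCI insertE singletonD)

lemma nbrs_subset:
  assumes "simple_graph V E"
  shows "nbrs E u \<subseteq> V"
  using simple_graph_edgeD[OF assms] by (auto simp: mem_nbrs_iff)

lemma not_mem_nbrs_self:
  assumes "simple_graph V E"
  shows "u \<notin> nbrs E u"
  using simple_graph_edgeD(3)[OF assms, of u u] by (auto simp: mem_nbrs_iff)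

lemma wdeg_cong:
  assumes "wv' u = wv u" "\<And>x. x \<in> nbrs E u \<Longrightarrow> we' {u, x} = we {u, x}"
  shows "wdeg E wv' we' u = wdeg E wv we u"
  unfolding wdeg_def using assms by (auto intro: sum.cong)

lemma nbrs_induced_edges:
  assumes "nbrs E u \<subseteq> S" "u \<in> S"
  shows "nbrs (induced_edges E S) u = nbrs E u"
  using assms unfolding nbrs_def induced_edges_def by auto

lemma wdeg_induced_edges:
  assumes "nbrs E u \<subseteq> S" "u \<in> S"
  shows "wdeg (induced_edges E S) wv we u = wdeg E wv we u"
  unfolding wdeg_def by (simp add: nbrs_induced_edges[OF assms])

definition closed_nbhd :: "'a set set \<Rightarrow> 'a set \<Rightarrow> 'a set" where
  "closed_nbhd E W = W \<union> \<Union>(nbrs E ` W)"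

lemma finite_closed_nbhd:
  assumes "locally_finite V E" "W \<subseteq> V" "finite W"
  shows "finite (closed_nbhd E W)"
  using assms unfolding closed_nbhd_def locally_finite_def by auto

lemma closed_nbhd_subset:
  assumes "simple_graph V E" "W \<subseteq> V"
  shows "closed_nbhd E W \<subseteq> V"
  using assms nbrs_subset[OF assms(1)] unfolding closed_nbhd_def by blast

lemma closed_nbhd_not_K2:
  assumes sg: "simple_graph V E" and ni: "no_isolated_edge E"
    and nbr: "\<And>w. w \<in> W \<Longrightarrow> \<exists>x\<in>W. {w, x} \<in> E"
  shows "\<not> is_K2 (closed_nbhd E W) E'"
proof
  assume "is_K2 (closed_nbhd E W) E'"
  then obtain a b where ab: "a \<noteq> b" "closed_nbhd E W = {a, b}"
    unfolding is_K2_def by blast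
  then obtain u where u: "u \<in> W"
    unfolding closed_nbhd_def by auto
  then obtain v where v: "v \<in> W" "{u, v} \<in> E"
    using nbr by blast
  have loc: "insert w (nbrs E w) \<subseteq> {a, b}" if "w \<in> W" for w
    using ab(2) that unfolding closed_nbhd_def by blast
  have "u \<noteq> v"
    using simple_graph_edgeD(3)[OF sg v(2)] .
  then have "{a, b} = {u, v}"
    using loc[OF u] loc[OF v(1)] ab(1) by auto
  then have "nbrs E u = {v}" "nbrs E v = {u}"
    using loc[OF u] loc[OF v(1)] not_mem_nbrs_self[OF sg] v(2)
    by (auto simp: mem_nbrs_iff insert_commute)
  then show False
    using ni v(2) unfolding no_isolated_edge_def by blast
qed

definition weights_from ::
  "'a set \<Rightarrow> 'a set set \<Rightarrow> ('a \<Rightarrow> nat set) \<Rightarrow> ('a set \<Rightarrow> nat set) \<Rightarrow> ('a \<Rightarrow> nat) \<Rightarrow> ('a set \<Rightarrow> nat) \<Rightarrow> bool" where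
  "weights_from V E Lv Le wv we \<longleftrightarrow> (\<forall>v\<in>V. wv v \<in> Lv v) \<and> (\<forall>e\<in>E. we e \<in> Le e)"

definition separates_edges :: "'a set set \<Rightarrow> ('a \<Rightarrow> nat) \<Rightarrow> ('a set \<Rightarrow> nat) \<Rightarrow> 'a set set \<Rightarrow> bool" where
  "separates_edges E wv we F \<longleftrightarrow> (\<forall>u v. {u, v} \<in> F \<longrightarrow> wdeg E wv we u \<noteq> wdeg E wv we v)"

lemma is_L_weighting_iff:
  "is_L_weighting V E Lv Le wv we \<longleftrightarrow> weights_from V E Lv Le wv we \<and> separates_edges E wv we E"
  unfolding is_L_weighting_def weights_from_def separates_edges_def by blast

lemma weighting_of_closed_nbhd:
  assumes sg: "simple_graph V E" and lf: "locally_finite V E" and ni: "no_isolated_edge E"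
    and H: "\<forall>S. S \<subseteq> V \<longrightarrow> finite S \<longrightarrow> \<not> is_K2 S (induced_edges E S) \<longrightarrow>
           (\<exists>wv we. is_L_weighting S (induced_edges E S) Lv Le wv we)"
    and W: "finite W" "W \<subseteq> V" "\<And>w. w \<in> W \<Longrightarrow> \<exists>x\<in>W. {w, x} \<in> E"
  shows "\<exists>wv we. is_L_weighting (closed_nbhd E W) (induced_edges E (closed_nbhd E W)) Lv Le wv we"
  using H[rule_format, OF closed_nbhd_subset[OF sg W(2)] finite_closed_nbhd[OF lf W(2,1)]
      closed_nbhd_not_K2[OF sg ni W(3)]] .

lemma lists_nonempty:
  assumes sg: "simple_graph V E" and lf: "locally_finite V E" and ni: "no_isolated_edge E"
    and H: "\<forall>S. S \<subseteq> V \<longrightarrow> finite S \<longrightarrow> \<not> is_K2 S (induced_edges E S) \<longrightarrow>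
           (\<exists>wv we. is_L_weighting S (induced_edges E S) Lv Le wv we)"
  shows "v \<in> V \<Longrightarrow> Lv v \<noteq> {}" and "e \<in> E \<Longrightarrow> Le e \<noteq> {}"
proof -
  show "Lv v \<noteq> {}" if vV: "v \<in> V"
  proof -
    have "\<not> is_K2 {v} (induced_edges E {v})"
      unfolding is_K2_def by (metis insertI1 insert_commute singletonD)
    then obtain wv we where "is_L_weighting {v} (induced_edges E {v}) Lv Le wv we"
      using H[rule_format, of "{v}"] vV by auto
    then show ?thesis
      unfolding is_L_weighting_def by auto
  qed
  show "Le e \<noteq> {}" if eE: "e \<in> E"
  proof -
    obtain wv we where
      "is_L_weighting (closed_nbhd E e) (induced_edges E (closed_nbhd E e)) Lv Le wv we"
      using weighting_of_closed_nbhd[OF sg lf ni H simple_graph_edge_subset[OF sg eE]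
          simple_graph_edge_other_end[OF sg eE]] by blast
    moreover have "e \<in> induced_edges E (closed_nbhd E e)"
      using eE by (simp add: induced_edges_def closed_nbhd_def)
    ultimately show ?thesis
      unfolding is_L_weighting_def by auto
  qed
qed

lemma separating_weighting_of_finite_edge_set:
  assumes sg: "simple_graph V E" and lf: "locally_finite V E" and ni: "no_isolated_edge E"
    and H: "\<forall>S. S \<subseteq> V \<longrightarrow> finite S \<longrightarrow> \<not> is_K2 S (induced_edges E S) \<longrightarrow>
           (\<exists>wv we. is_L_weighting S (induced_edges E S) Lv Le wv we)"
    and F: "finite F" "F \<subseteq> E"
  shows "\<exists>wv we. weights_from V E Lv Le wv we \<and> separates_edges E wv we F"
proof -
  define W where "W = \<Union>F"
  define S where "S = closed_nbhd E W"
  have "finite W"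
    unfolding W_def using F simple_graph_edge_subset(1)[OF sg] by (intro finite_Union) auto
  moreover have "W \<subseteq> V"
    unfolding W_def using F simple_graph_edge_subset(2)[OF sg] by blast
  moreover have "\<exists>x\<in>W. {w, x} \<in> E" if "w \<in> W" for w
    using that F(2) simple_graph_edge_other_end[OF sg] unfolding W_def by blast
  ultimately obtain wS weS where wS: "is_L_weighting S (induced_edges E S) Lv Le wS weS"
    using weighting_of_closed_nbhd[OF sg lf ni H] unfolding S_def by blast
  define wv where "wv v = (if v \<in> S then wS v else SOME x. x \<in> Lv v)" for v
  define we where "we e = (if e \<subseteq> S then weS e else SOME x. x \<in> Le e)" for e
  have "weights_from V E Lv Le wv we"
    using wS lists_nonempty[OF sg lf ni H] some_in_eq
    unfolding weights_from_def is_L_weighting_def wv_def we_def induced_edges_def by auto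
  moreover have "wdeg E wv we w = wdeg (induced_edges E S) wS weS w" if "w \<in> W" for w
  proof -
    have loc: "nbrs E w \<subseteq> S" "w \<in> S"
      using that unfolding S_def closed_nbhd_def by auto
    have "wdeg E wv we w = wdeg E wS weS w"
      by (rule wdeg_cong) (use loc in \<open>auto simp: wv_def we_def\<close>)
    also have "\<dots> = wdeg (induced_edges E S) wS weS w"
      using wdeg_induced_edges[OF loc] by simp
    finally show ?thesis .
  qed
  moreover have "{u, v} \<in> induced_edges E S" "u \<in> W" "v \<in> W" if "{u, v} \<in> F" for u v
    using that F(2) unfolding induced_edges_def S_def W_def closed_nbhd_def by auto
  ultimately show ?thesis
    using wS unfolding separates_edges_def is_L_weighting_def by metis
qed

lemma weighting_if_finite_edge_sets_separable:
  assumes sg: "simple_graph V E" and lf: "locally_finite V E"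
    and fin_Lv: "\<And>v. v \<in> V \<Longrightarrow> finite (Lv v)" and fin_Le: "\<And>e. e \<in> E \<Longrightarrow> finite (Le e)"
    and sep: "\<And>F. finite F \<Longrightarrow> F \<subseteq> E \<Longrightarrow>
                \<exists>wv we. weights_from V E Lv Le wv we \<and> separates_edges E wv we F"
  shows "\<exists>wv we. is_L_weighting V E Lv Le wv we"
proof -
  define I where "I = Inl ` V \<union> Inr ` E"
  define L where "L = case_sum Lv Le"
  define J where "J e = Inl ` e \<union> Inr ` (\<Union>w\<in>e. (\<lambda>x. {w, x}) ` nbrs E w)" for e
  define P where "P e f \<longleftrightarrow> separates_edges E (f \<circ> Inl) (f \<circ> Inr) {e}"
    for e and f :: "'a + 'a set \<Rightarrow> nat"
  have "\<exists>f\<in>Pi\<^sub>E I L. \<forall>e\<in>E. P e f"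
  proof (rule PiE_finite_intersection_property)
    show "finite (L i)" if "i \<in> I" for i
      using that fin_Lv fin_Le by (auto simp: I_def L_def)
    show "finite (J e)" if "e \<in> E" for e
    proof -
      obtain u v where "e = {u, v}" "u \<in> V" "v \<in> V"
        using simple_graph_edgeE[OF sg \<open>e \<in> E\<close>] by metis
      then show ?thesis
        using lf by (simp add: J_def locally_finite_def)
    qed
    show "P e g" if "e \<in> E" "f \<in> Pi\<^sub>E I L" "g \<in> Pi\<^sub>E I L"
      and fg: "\<And>i. i \<in> J e \<Longrightarrow> f i = g i" and "P e f" for e f g
    proof -
      have "wdeg E (g \<circ> Inl) (g \<circ> Inr) w = wdeg E (f \<circ> Inl) (f \<circ> Inr) w" if "w \<in> e" for w
      proof (rule wdeg_cong)
        show "(g \<circ> Inl) w = (f \<circ> Inl) w"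
          using fg[of "Inl w"] \<open>w \<in> e\<close> by (simp add: J_def)
        show "(g \<circ> Inr) {w, x} = (f \<circ> Inr) {w, x}" if "x \<in> nbrs E w" for x
        proof -
          have "Inr {w, x} \<in> J e"
            using \<open>w \<in> e\<close> that unfolding J_def by blast
          then show ?thesis
            using fg by simp
        qed
      qed
      then show ?thesis
        using \<open>P e f\<close> unfolding P_def separates_edges_def by auto
    qed
    show "\<exists>f\<in>Pi\<^sub>E I L. \<forall>e\<in>F. P e f" if F: "finite F" "F \<subseteq> E" for F
    proof -
      obtain wv we where w: "weights_from V E Lv Le wv we" "separates_edges E wv we F"
        using sep[OF F] by blast
      define f where "f = restrict (case_sum wv we) I"
      have "f \<in> Pi\<^sub>E I L"
        using w(1) by (auto simp: f_def I_def L_def weights_from_def)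
      moreover have "wdeg E (f \<circ> Inl) (f \<circ> Inr) u = wdeg E wv we u" if "u \<in> V" for u
        by (rule wdeg_cong) (use that in \<open>auto simp: f_def I_def mem_nbrs_iff\<close>)
      then have "P e f" if "e \<in> F" for e
        using w(2) that \<open>F \<subseteq> E\<close> simple_graph_edgeD[OF sg]
        unfolding P_def separates_edges_def by (metis singletonD subsetD)
      ultimately show ?thesis
        by blast
    qed
  qed
  then obtain f where f: "f \<in> Pi\<^sub>E I L" "\<forall>e\<in>E. P e f"
    by blast
  have "weights_from V E Lv Le (f \<circ> Inl) (f \<circ> Inr)"
    using f(1) unfolding weights_from_def I_def L_def PiE_iff by force
  moreover have "separates_edges E (f \<circ> Inl) (f \<circ> Inr) E"
    using f(2) unfolding P_def separates_edges_def by blast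
  ultimately show ?thesis
    unfolding is_L_weighting_iff by blast
qed

theorem lemma6:
  fixes V :: "'a set" and E :: "'a set set"
    and Lv :: "'a \<Rightarrow> nat set" and Le :: "'a set \<Rightarrow> nat set" and k :: nat
  assumes "simple_graph V E"
    and "locally_finite V E"
    and "no_isolated_edge E"
    and "\<forall>v\<in>V. Lv v \<subseteq> {1..k}"
    and "\<forall>e\<in>E. Le e \<subseteq> {1..k}"
    and "\<forall>S. S \<subseteq> V \<longrightarrow> finite S \<longrightarrow> \<not> is_K2 S (induced_edges E S) \<longrightarrow>
           (\<exists>wv we. is_L_weighting S (induced_edges E S) Lv Le wv we)"
  shows "\<exists>wv we. is_L_weighting V E Lv Le wv we"
proof (rule weighting_if_finite_edge_sets_separable[OF assms(1,2)])
  show "finite (Lv v)" if "v \<in> V" for v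
    using assms(4) that finite_subset by blast
  show "finite (Le e)" if "e \<in> E" for e
    using assms(5) that finite_subset by blast
  show "\<exists>wv we. weights_from V E Lv Le wv we \<and> separates_edges E wv we F"
    if "finite F" "F \<subseteq> E" for F
    using separating_weighting_of_finite_edge_set[OF assms(1-3,6) that] .
qed

end
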